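(* Let $E\subset\mathbb{R}^2$ be a set of finite perimeter with $|E|=1$ and let $R=[-\frac a2,\frac a2]\times[-\frac b2,\frac b2]$ be the axis-parallel rectangle with barycenter $(0,0)$, horizontal sidelength $a>0$, vertical sidelength $b>0$ and $|R|=ab=1$. Then for every $\eta\in\{\pm e_1,\pm e_2\}$, $$\mathcal{D}(E,R)\ \ge\ \mathcal{D}(E^{\eta},R).$$
   Context: $\{e_1,e_2\}$ is the canonical basis of $\mathbb{R}^2$; $|z|_\infty=\max\{|z_1|,|z_2|\}$. For $F\subset\mathbb{R}^2$, $d_\infty(z,\partial F)=\inf\{|z-\hat z|_\infty:\hat z\in\partial F\}$, and for measurable $E,F$ the dissipation is $\mathcal{D}(E,F)=\int_{E\triangle F}d_\infty(z,\partial F)\,dz$. For $\eta\in\mathcal S^1$, $\eta^\perp\in\mathcal S^1$ is the unit vector orthogonal to $\eta$ with $\{\eta,\eta^\perp\}$ positively oriented, $\mathbf p_\nu$ denotes the orthogonal projection onto the line spanned by $\nu$; the section of $E$ is $E^\eta_z=\{t\in\mathbb{R}:\mathbf p_{\eta^\perp}z+t\eta\in E\}$ and the Steiner symmetrization of $E$ in direction $\eta$ is $E^\eta=\{z\in\mathbb{R}^2:|\mathbf p_\eta z|\le \mathcal L^1(E^\eta_z)/2\}$. *)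

theory Defs
  imports "HOL-Analysis.Analysis"
begin

definition linf :: "real \<times> real \<Rightarrow> real" where
  "linf z = max \<bar>fst z\<bar> \<bar>snd z\<bar>"

definition dist_inf_bd :: "(real \<times> real) set \<Rightarrow> real \<times> real \<Rightarrow> real" where
  "dist_inf_bd F z = Inf {linf (z - w) | w. w \<in> frontier F}"

definition dissipation :: "(real \<times> real) set \<Rightarrow> (real \<times> real) set \<Rightarrow> ennreal" where
  "dissipation E F = (\<integral>\<^sup>+ z \<in> (E - F) \<union> (F - E). ennreal (dist_inf_bd F z) \<partial>lebesgue)"

definition perp :: "real \<times> real \<Rightarrow> real \<times> real" where
  "perp v = (- snd v, fst v)"

definition proj :: "real \<times> real \<Rightarrow> real \<times> real \<Rightarrow> real \<times> real" where
  "proj nu z = (z \<bullet> nu) *\<^sub>R nu"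

definition line_section :: "(real \<times> real) set \<Rightarrow> real \<times> real \<Rightarrow> real \<times> real \<Rightarrow> real set" where
  "line_section E eta z = {t. proj (perp eta) z + t *\<^sub>R eta \<in> E}"

definition steiner :: "(real \<times> real) set \<Rightarrow> real \<times> real \<Rightarrow> (real \<times> real) set" where
  "steiner E eta = {z. ennreal (2 * norm (proj eta z)) \<le> emeasure lebesgue (line_section E eta z)}"

definition admissible_field ::
  "(real \<times> real \<Rightarrow> real \<times> real) \<Rightarrow> (real \<times> real \<Rightarrow> real \<times> real \<Rightarrow> real \<times> real) \<Rightarrow> bool" where
  "admissible_field \<phi> D \<longleftrightarrow>
     (\<forall>x. (\<phi> has_derivative D x) (at x)) \<and>
     (\<forall>v. continuous_on UNIV (\<lambda>x. D x v)) \<and>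
     bounded {x. \<phi> x \<noteq> 0} \<and>
     (\<forall>x. norm (\<phi> x) \<le> 1)"

definition divergence :: "(real \<times> real \<Rightarrow> real \<times> real \<Rightarrow> real \<times> real) \<Rightarrow> real \<times> real \<Rightarrow> real" where
  "divergence D x = fst (D x (1, 0)) + snd (D x (0, 1))"

definition perimeter :: "(real \<times> real) set \<Rightarrow> ereal" where
  "perimeter E = (SUP (\<phi>, D) \<in> {(\<phi>, D). admissible_field \<phi> D}.
                    ereal (integral\<^sup>L lebesgue (\<lambda>x. indicator E x * divergence D x)))"

definition finite_perimeter :: "(real \<times> real) set \<Rightarrow> bool" where
  "finite_perimeter E \<longleftrightarrow> E \<in> sets lebesgue \<and> perimeter E < \<infinity>"

end

theory Submission
  imports Defs
begin

(* For the centred box R = [-a/2, a/2] x [-b/2, b/2] the l-infinity distance to the boundary of R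
   is |sigma| with sigma (x, y) = max (|x| - a/2) (|y| - b/2), and R = {sigma <= 0}; hence
   D(E, R) is the integral of |sigma| over sym_diff E {sigma <= 0}.  On every horizontal (vertical)
   line sigma is even and nondecreasing in |t|, and Steiner symmetrisation in direction +-e1 (+-e2)
   replaces the section of E on that line by the centred interval of the same length.  By Tonelli
   it therefore suffices to prove a one-dimensional bathtub principle: for g even and nondecreasing
   in |t|, the centred interval I with |I| = |A| minimises the integral of |g| over
   sym_diff A {g <= 0}. *)

definition signed_dist_box :: "real \<Rightarrow> real \<Rightarrow> real \<times> real \<Rightarrow> real" where
  "signed_dist_box \<alpha> \<beta> z = max (\<bar>fst z\<bar> - \<alpha>) (\<bar>snd z\<bar> - \<beta>)"

lemma mem_box_iff_signed_dist_box:
  "z \<in> {-\<alpha>..\<alpha>} \<times> {-\<beta>..\<beta>} \<longleftrightarrow> signed_dist_box \<alpha> \<beta> z \<le> 0"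
  by (cases z) (auto simp: signed_dist_box_def abs_le_iff)

lemma borel_measurable_fst [measurable]: "fst \<in> borel_measurable borel"
  by (intro borel_measurable_continuous_onI continuous_intros)

lemma borel_measurable_snd [measurable]: "snd \<in> borel_measurable borel"
  by (intro borel_measurable_continuous_onI continuous_intros)

lemma borel_measurable_signed_dist_box [measurable]: "signed_dist_box \<alpha> \<beta> \<in> borel_measurable borel"
  unfolding signed_dist_box_def[abs_def] by measurable

lemma frontier_box:
  fixes \<alpha> \<beta> :: real
  assumes "\<alpha> > 0" "\<beta> > 0"
  shows "frontier ({-\<alpha>..\<alpha>} \<times> {-\<beta>..\<beta>}) =
    {w. \<bar>fst w\<bar> \<le> \<alpha> \<and> \<bar>snd w\<bar> \<le> \<beta> \<and> (\<bar>fst w\<bar> = \<alpha> \<or> \<bar>snd w\<bar> = \<beta>)}"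
proof -
  have "frontier ({-\<alpha>..\<alpha>} \<times> {-\<beta>..\<beta>}) = {-\<alpha>..\<alpha>} \<times> {-\<beta>..\<beta>} - {-\<alpha><..<\<alpha>} \<times> {-\<beta><..<\<beta>}"
    by (simp add: frontier_def closure_Times interior_Times)
  also have "\<dots> = {w. \<bar>fst w\<bar> \<le> \<alpha> \<and> \<bar>snd w\<bar> \<le> \<beta> \<and> (\<bar>fst w\<bar> = \<alpha> \<or> \<bar>snd w\<bar> = \<beta>)}"
    by (auto simp: abs_le_iff)
  finally show ?thesis .
qed

lemma dist_inf_bd_box:
  fixes \<alpha> \<beta> :: real
  assumes "\<alpha> > 0" "\<beta> > 0"
  shows "dist_inf_bd ({-\<alpha>..\<alpha>} \<times> {-\<beta>..\<beta>}) z = \<bar>signed_dist_box \<alpha> \<beta> z\<bar>"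
proof -
  obtain x y where z: "z = (x, y)" by (cases z)
  define d where "d = \<bar>signed_dist_box \<alpha> \<beta> z\<bar>"
  have lower: "d \<le> linf (z - q)" if "\<bar>fst q\<bar> \<le> \<alpha>" "\<bar>snd q\<bar> \<le> \<beta>" "\<bar>fst q\<bar> = \<alpha> \<or> \<bar>snd q\<bar> = \<beta>" for q
    using that by (cases q) (simp add: d_def signed_dist_box_def linf_def z, linarith)
  \<comment> \<open>a nearest boundary point: move the coordinate of larger excess onto its side, clamp the other\<close>
  define clamp where "clamp r s = max (- r) (min r s)" for r s :: real
  define side where "side r s = (if s \<ge> 0 then r else - r)" for r s :: real
  define p where "p = (if \<bar>x\<bar> - \<alpha> \<ge> \<bar>y\<bar> - \<beta> then (side \<alpha> x, clamp \<beta> y) else (clamp \<alpha> x, side \<beta> y))"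
  have p: "\<bar>fst p\<bar> \<le> \<alpha> \<and> \<bar>snd p\<bar> \<le> \<beta> \<and> (\<bar>fst p\<bar> = \<alpha> \<or> \<bar>snd p\<bar> = \<beta>) \<and> linf (z - p) = d"
    using assms unfolding p_def clamp_def side_def d_def signed_dist_box_def linf_def z
    by (smt (verit) fst_conv snd_conv fst_diff snd_diff)
  have "Inf {linf (z - q) | q. q \<in> frontier ({-\<alpha>..\<alpha>} \<times> {-\<beta>..\<beta>})} = d"
  proof (rule cInf_eq_minimum)
    show "d \<in> {linf (z - q) | q. q \<in> frontier ({-\<alpha>..\<alpha>} \<times> {-\<beta>..\<beta>})}"
      using p unfolding frontier_box[OF assms] by force
  qed (use lower in \<open>auto simp: frontier_box[OF assms]\<close>)
  then show ?thesis
    by (simp add: dist_inf_bd_def d_def)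
qed

lemma dissipation_eq_nn_integral_lborel:
  "dissipation E F = (\<integral>\<^sup>+z. ennreal (dist_inf_bd F z) * indicator (sym_diff E F) z \<partial>lborel)"
  unfolding dissipation_def by (rule nn_integral_completion)

lemma dissipation_cong_AE:
  assumes "AE z in lborel. z \<in> E \<longleftrightarrow> z \<in> S"
  shows "dissipation E F = dissipation S F"
  unfolding dissipation_eq_nn_integral_lborel
  by (rule nn_integral_cong_AE) (use assms in \<open>auto elim!: eventually_mono simp: indicator_def\<close>)

lemma dissipation_box:
  fixes \<alpha> \<beta> :: real
  assumes "\<alpha> > 0" "\<beta> > 0"
  shows "dissipation E ({-\<alpha>..\<alpha>} \<times> {-\<beta>..\<beta>}) = (\<integral>\<^sup>+z. ennreal \<bar>signed_dist_box \<alpha> \<beta> z\<bar>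
            * indicator (sym_diff E {z. signed_dist_box \<alpha> \<beta> z \<le> 0}) z \<partial>lborel)"
proof -
  have "{-\<alpha>..\<alpha>} \<times> {-\<beta>..\<beta>} = {z. signed_dist_box \<alpha> \<beta> z \<le> 0}"
    using mem_box_iff_signed_dist_box by blast
  then show ?thesis
    unfolding dissipation_eq_nn_integral_lborel dist_inf_bd_box[OF assms] by simp
qed

(* This is (g x - c) (1_I x - 1_A x) <= 0, since |g| 1_(sym_diff X {g <= 0}) = g 1_X + max (- g) 0;
   the terms with c are moved so that both sides are nonnegative. *)
lemma bathtub_pointwise:
  fixes g :: "'a \<Rightarrow> real"
  assumes "x \<in> I \<Longrightarrow> g x \<le> c" "x \<notin> I \<Longrightarrow> c \<le> g x"
  shows "ennreal \<bar>g x\<bar> * indicator (sym_diff I {x. g x \<le> 0}) x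
           + (ennreal (max c 0) * indicator A x + ennreal (max (- c) 0) * indicator I x)
    \<le> ennreal \<bar>g x\<bar> * indicator (sym_diff A {x. g x \<le> 0}) x
           + (ennreal (max c 0) * indicator I x + ennreal (max (- c) 0) * indicator A x)"
proof -
  have "\<bar>g x\<bar> * indicator (sym_diff I {x. g x \<le> 0}) x + (max c 0 * indicator A x + max (- c) 0 * indicator I x)
    \<le> \<bar>g x\<bar> * indicator (sym_diff A {x. g x \<le> 0}) x + (max c 0 * indicator I x + max (- c) 0 * indicator A x)"
    using assms by (cases "x \<in> A"; cases "x \<in> I") (auto simp: indicator_def abs_if max_def)
  then have "ennreal (\<bar>g x\<bar> * indicator (sym_diff I {x. g x \<le> 0}) x + (max c 0 * indicator A x + max (- c) 0 * indicator I x))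
    \<le> ennreal (\<bar>g x\<bar> * indicator (sym_diff A {x. g x \<le> 0}) x + (max c 0 * indicator I x + max (- c) 0 * indicator A x))"
    by (rule ennreal_leI)
  then show ?thesis
    by (simp add: ennreal_mult ennreal_indicator)
qed

lemma bathtub_sym_diff_le:
  fixes g :: "'a \<Rightarrow> real"
  assumes [measurable]: "I \<in> sets M" "A \<in> sets M" "g \<in> borel_measurable M"
    and same_measure: "emeasure M I = emeasure M A" and finite: "emeasure M A \<noteq> \<infinity>"
    and below: "\<And>x. x \<in> I \<Longrightarrow> g x \<le> c" and above: "\<And>x. x \<notin> I \<Longrightarrow> c \<le> g x"
  shows "(\<integral>\<^sup>+x. ennreal \<bar>g x\<bar> * indicator (sym_diff I {x. g x \<le> 0}) x \<partial>M)
       \<le> (\<integral>\<^sup>+x. ennreal \<bar>g x\<bar> * indicator (sym_diff A {x. g x \<le> 0}) x \<partial>M)"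
    (is "?L \<le> ?R")
proof -
  define p :: "'a set \<Rightarrow> 'a set \<Rightarrow> 'a \<Rightarrow> ennreal"
    where "p X Y x = ennreal (max c 0) * indicator X x + ennreal (max (- c) 0) * indicator Y x" for X Y x
  have [measurable]: "p X Y \<in> borel_measurable M" if "X \<in> sets M" "Y \<in> sets M" for X Y
    unfolding p_def using that by measurable
  have int_p: "(\<integral>\<^sup>+x. p X Y x \<partial>M) = ennreal (max c 0) * emeasure M X + ennreal (max (- c) 0) * emeasure M Y"
    if [measurable]: "X \<in> sets M" "Y \<in> sets M" for X Y
    unfolding p_def by (subst nn_integral_add) (auto simp: nn_integral_cmult_indicator)
  define K where "K = (\<integral>\<^sup>+x. p A I x \<partial>M)"
  have K_swap: "(\<integral>\<^sup>+x. p I A x \<partial>M) = K" and "K \<noteq> \<infinity>"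
    using finite by (auto simp: K_def int_p same_measure ennreal_mult_eq_top_iff)
  have "?L + K = (\<integral>\<^sup>+x. ennreal \<bar>g x\<bar> * indicator (sym_diff I {x. g x \<le> 0}) x + p A I x \<partial>M)"
    unfolding K_def by (rule nn_integral_add[symmetric]) auto
  also have "\<dots> \<le> (\<integral>\<^sup>+x. ennreal \<bar>g x\<bar> * indicator (sym_diff A {x. g x \<le> 0}) x + p I A x \<partial>M)"
    unfolding p_def by (intro nn_integral_mono bathtub_pointwise below above)
  also have "\<dots> = ?R + K"
    unfolding K_swap[symmetric] by (rule nn_integral_add) auto
  finally have "K + ?L \<le> K + ?R"
    by (simp only: add.commute)
  with \<open>K \<noteq> \<infinity>\<close> show ?thesis
    using ennreal_add_left_cancel_le by blast
qed

lemma radially_nondecreasing_borel_measurable: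
  fixes g :: "real \<Rightarrow> real"
  assumes "\<And>s t. \<bar>s\<bar> \<le> \<bar>t\<bar> \<Longrightarrow> g s \<le> g t"
  shows "g \<in> borel_measurable borel"
proof -
  have "mono (\<lambda>x. g (max x 0))"
    using assms by (intro monoI) auto
  then have [measurable]: "(\<lambda>x. g (max x 0)) \<in> borel_measurable borel"
    by (rule borel_measurable_mono)
  have "(\<lambda>x. g (max \<bar>x\<bar> 0)) \<in> borel_measurable borel"
    by measurable
  moreover have "g (max \<bar>x\<bar> 0) = g x" for x
    using assms[of x "\<bar>x\<bar>"] assms[of "\<bar>x\<bar>" x] by (simp add: antisym)
  ultimately show ?thesis
    by simp
qed

lemma nn_integral_symmetric_rearrangement_le:
  fixes g :: "real \<Rightarrow> real" and A :: "real set"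
  assumes [measurable]: "A \<in> sets borel" and g_mono: "\<And>s t. \<bar>s\<bar> \<le> \<bar>t\<bar> \<Longrightarrow> g s \<le> g t"
  shows "(\<integral>\<^sup>+t. ennreal \<bar>g t\<bar> * indicator (sym_diff {t. ennreal (2 * \<bar>t\<bar>) \<le> emeasure lborel A} {t. g t \<le> 0}) t \<partial>lborel)
       \<le> (\<integral>\<^sup>+t. ennreal \<bar>g t\<bar> * indicator (sym_diff A {t. g t \<le> 0}) t \<partial>lborel)"
    (is "?L \<le> ?R")
proof (cases "emeasure lborel A = \<infinity>")
  case True
  show ?thesis
  proof (cases "\<forall>t. g t \<le> 0")
    case True
    with \<open>emeasure lborel A = \<infinity>\<close> show ?thesis
      by simp
  next
    case False
    then obtain t0 where "g t0 > 0"
      by (auto simp: not_le)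
    define B where "B = {-\<bar>t0\<bar>..\<bar>t0\<bar>}"
    have "emeasure lborel A \<le> emeasure lborel (A - B) + emeasure lborel B"
      by (rule order_trans[OF emeasure_mono emeasure_subadditive]) (auto simp: B_def)
    with True have "emeasure lborel (A - B) = \<infinity>"
      by (auto simp: B_def top_unique ennreal_add_eq_top)
    with \<open>g t0 > 0\<close> have "\<infinity> = (\<integral>\<^sup>+t. ennreal (g t0) * indicator (A - B) t \<partial>lborel)"
      by (simp add: nn_integral_cmult_indicator B_def ennreal_mult_top)
    also have "\<dots> \<le> ?R"
    proof (rule nn_integral_mono)
      fix t
      show "ennreal (g t0) * indicator (A - B) t \<le> ennreal \<bar>g t\<bar> * indicator (sym_diff A {t. g t \<le> 0}) t"
      proof (cases "t \<in> A - B")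
        case True
        then have "g t0 \<le> g t"
          by (intro g_mono) (auto simp: B_def)
        with True \<open>g t0 > 0\<close> show ?thesis
          by (simp add: ennreal_leI)
      qed simp
    qed
    finally show ?thesis
      by (simp add: top_unique)
  qed
next
  case False
  then obtain m where m: "emeasure lborel A = ennreal m" "m \<ge> 0"
    by (cases "emeasure lborel A") auto
  define I where "I = {-(m/2)..m/2}"
  have "{t. ennreal (2 * \<bar>t\<bar>) \<le> emeasure lborel A} = I"
    using m by (auto simp: I_def ennreal_le_iff)
  moreover have "(\<integral>\<^sup>+t. ennreal \<bar>g t\<bar> * indicator (sym_diff I {t. g t \<le> 0}) t \<partial>lborel) \<le> ?R"
  proof (rule bathtub_sym_diff_le[where c = "g (m/2)"])
    show "g \<in> borel_measurable lborel"
      using radially_nondecreasing_borel_measurable[OF g_mono] by simp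
    show "emeasure lborel I = emeasure lborel A"
      using m by (simp add: I_def)
  qed (use m in \<open>auto simp: I_def intro!: g_mono\<close>)
  ultimately show ?thesis
    by simp
qed

lemma sets_lborel_pair_iff: "S \<in> sets (lborel \<Otimes>\<^sub>M lborel) \<longleftrightarrow> S \<in> sets borel"
  by (simp only: lborel_prod sets_lborel)

lemma nn_integral_lborel_pair_fst:
  fixes f :: "'a::euclidean_space \<times> 'b::euclidean_space \<Rightarrow> ennreal"
  assumes "f \<in> borel_measurable borel"
  shows "(\<integral>\<^sup>+z. f z \<partial>lborel) = (\<integral>\<^sup>+x. \<integral>\<^sup>+y. f (x, y) \<partial>lborel \<partial>lborel)"
proof -
  have "f \<in> borel_measurable (lborel \<Otimes>\<^sub>M lborel)"
    using assms by (subst lborel_prod) simp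
  from lborel.nn_integral_fst[OF this] show ?thesis
    by (simp only: lborel_prod)
qed

lemma nn_integral_lborel_pair_snd:
  fixes f :: "'a::euclidean_space \<times> 'b::euclidean_space \<Rightarrow> ennreal"
  assumes "f \<in> borel_measurable borel"
  shows "(\<integral>\<^sup>+z. f z \<partial>lborel) = (\<integral>\<^sup>+y. \<integral>\<^sup>+x. f (x, y) \<partial>lborel \<partial>lborel)"
proof -
  have "f \<in> borel_measurable (lborel \<Otimes>\<^sub>M lborel)"
    using assms by (subst lborel_prod) simp
  from lborel_pair.nn_integral_snd[OF this] show ?thesis
    by (simp only: lborel_prod)
qed

lemma AE_lborel_pair_fst:
  assumes "AE x in lborel. P x"
  shows "AE z in (lborel :: ('a::euclidean_space \<times> 'b::euclidean_space) measure). P (fst z)"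
proof -
  obtain N where N: "{x. \<not> P x} \<subseteq> N" "N \<in> null_sets lborel"
    using assms unfolding eventually_ae_filter by auto
  have "N \<times> UNIV \<in> null_sets (lborel :: ('a::euclidean_space \<times> 'b::euclidean_space) measure)"
    using lborel.times_in_null_sets1[of N lborel UNIV] N(2) by (simp add: lborel_prod)
  then show ?thesis
    by (rule AE_I') (use N(1) in auto)
qed

lemma AE_lborel_pair_snd:
  assumes "AE y in lborel. P y"
  shows "AE z in (lborel :: ('a::euclidean_space \<times> 'b::euclidean_space) measure). P (snd z)"
proof -
  obtain N where N: "{y. \<not> P y} \<subseteq> N" "N \<in> null_sets lborel"
    using assms unfolding eventually_ae_filter by auto
  have "UNIV \<times> N \<in> null_sets (lborel :: ('a::euclidean_space \<times> 'b::euclidean_space) measure)"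
    using lborel.times_in_null_sets2[of UNIV lborel N] N(2) by (simp add: lborel_prod)
  then show ?thesis
    by (rule AE_I') (use N(1) in auto)
qed

lemma emeasure_lebesgue_cong_AE:
  fixes A B :: "'a::euclidean_space set"
  assumes "B \<in> sets borel" and "AE x in lborel. x \<in> B \<longleftrightarrow> x \<in> A"
  shows "emeasure lebesgue A = emeasure lebesgue B"
proof -
  have ae: "AE x in lebesgue. x \<in> B \<longleftrightarrow> x \<in> A"
    using assms(2) by (rule AE_completion)
  moreover have "A \<in> sets lebesgue"
    using completion.in_sets_AE[OF ae] assms(1) by simp
  ultimately show ?thesis
    using emeasure_eq_AE[OF ae] assms(1) by simp
qed

lemma AE_sections_notin_null_set:
  fixes N :: "('a::euclidean_space \<times> 'b::euclidean_space) set"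
  assumes "N \<in> null_sets lborel"
  shows AE_Pair_notin_null_set: "AE x in lborel. AE t in lborel. (x, t) \<notin> N"
    and AE_Pair'_notin_null_set: "AE y in lborel. AE t in lborel. (t, y) \<notin> N"
proof -
  have [measurable]: "N \<in> sets borel"
    using assms by auto
  have "AE z in lborel \<Otimes>\<^sub>M lborel. z \<notin> N"
    using AE_not_in[OF assms] by (simp only: lborel_prod)
  then show AE_fst: "AE x in lborel. AE t in lborel. (x, t) \<notin> N"
    by (rule lborel_pair.AE_pair)
  have "{z \<in> space (lborel \<Otimes>\<^sub>M lborel). (fst z, snd z) \<notin> N} = UNIV - N"
    by (auto simp: space_pair_measure)
  also have "\<dots> \<in> sets (lborel \<Otimes>\<^sub>M lborel)"
    unfolding sets_lborel_pair_iff by measurable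
  finally show "AE y in lborel. AE t in lborel. (t, y) \<notin> N"
    using lborel_pair.AE_commute[of "\<lambda>x y. (x, y) \<notin> N"] AE_fst by simp
qed

lemma lebesgue_set_borel_representative:
  fixes E :: "('a::euclidean_space \<times> 'b::euclidean_space) set"
  assumes "E \<in> sets lebesgue"
  obtains S where "S \<in> sets borel" and "AE z in lborel. z \<in> E \<longleftrightarrow> z \<in> S"
    and "AE y in lborel. emeasure lebesgue {t. (t, y) \<in> E} = emeasure lebesgue {t. (t, y) \<in> S}"
    and "AE x in lborel. emeasure lebesgue {t. (x, t) \<in> E} = emeasure lebesgue {t. (x, t) \<in> S}"
proof -
  obtain S N N' where E: "E = S \<union> N" "N \<subseteq> N'" "N' \<in> null_sets lborel" and S: "S \<in> sets borel"
    using sets_completionE[OF assms] by (metis sets_lborel)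
  have S_sections: "{t. (x, t) \<in> S} \<in> sets borel" "{t. (t, y) \<in> S} \<in> sets borel" for x y
    using sets_Pair1[OF S[folded sets_lborel_pair_iff]] sets_Pair2[OF S[folded sets_lborel_pair_iff]]
    by (simp_all add: vimage_def)
  show ?thesis
  proof (rule that[OF S])
    show "AE z in lborel. z \<in> E \<longleftrightarrow> z \<in> S"
      using AE_not_in[OF E(3)] by eventually_elim (use E in auto)
    show "AE y in lborel. emeasure lebesgue {t. (t, y) \<in> E} = emeasure lebesgue {t. (t, y) \<in> S}"
      using AE_Pair'_notin_null_set[OF E(3)]
    proof eventually_elim
      case (elim y)
      then have "AE t in lborel. t \<in> {t. (t, y) \<in> S} \<longleftrightarrow> t \<in> {t. (t, y) \<in> E}"
        by eventually_elim (use E in auto)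
      then show ?case
        by (rule emeasure_lebesgue_cong_AE[OF S_sections(2)])
    qed
    show "AE x in lborel. emeasure lebesgue {t. (x, t) \<in> E} = emeasure lebesgue {t. (x, t) \<in> S}"
      using AE_Pair_notin_null_set[OF E(3)]
    proof eventually_elim
      case (elim x)
      then have "AE t in lborel. t \<in> {t. (x, t) \<in> S} \<longleftrightarrow> t \<in> {t. (x, t) \<in> E}"
        by eventually_elim (use E in auto)
      then show ?case
        by (rule emeasure_lebesgue_cong_AE[OF S_sections(1)])
    qed
  qed
qed

lemma steiner_uminus: "steiner E (- \<eta>) = steiner E \<eta>"
proof -
  have "perp (- \<eta>) = - perp \<eta>"
    by (simp add: perp_def)
  moreover have proj_uminus: "proj (- v) z = proj v z" for v z
    by (simp add: proj_def)
  moreover have "uminus ` X = {t. - t \<in> X}" for X :: "real set"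
    by (auto intro: image_eqI[where x = "- t" for t])
  ultimately have "line_section E (- \<eta>) z = uminus ` line_section E \<eta> z" for z
    by (simp add: line_section_def)
  moreover have "emeasure lebesgue (uminus ` X) = emeasure lebesgue X" for X :: "real set"
    using emeasure_lebesgue_affine[of "-1" 0 X] by simp
  ultimately show ?thesis
    by (simp add: steiner_def proj_uminus)
qed

lemma steiner_e1: "steiner E (1, 0) = {z. ennreal (2 * \<bar>fst z\<bar>) \<le> emeasure lebesgue {t. (t, snd z) \<in> E}}"
  by (simp add: steiner_def proj_def perp_def line_section_def inner_prod_def)

lemma steiner_e2: "steiner E (0, 1) = {z. ennreal (2 * \<bar>snd z\<bar>) \<le> emeasure lebesgue {t. (fst z, t) \<in> E}}"
  by (simp add: steiner_def proj_def perp_def line_section_def inner_prod_def)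

lemma steiner_e1_borel:
  assumes "S \<in> sets borel"
  shows "steiner S (1, 0) \<in> sets borel"
proof -
  define h where "h y = emeasure lborel ((\<lambda>x. (x, y)) -` S)" for y
  have [measurable]: "h \<in> borel_measurable borel"
    using lborel_pair.measurable_emeasure_Pair2[OF assms[folded sets_lborel_pair_iff]]
    by (simp add: h_def[abs_def])
  have "(\<lambda>x. (x, y)) -` S \<in> sets borel" for y
    using sets_Pair2[OF assms[folded sets_lborel_pair_iff]] by simp
  then have "steiner S (1, 0) = {z. ennreal (2 * \<bar>fst z\<bar>) \<le> h (snd z)}"
    by (simp add: steiner_e1 h_def vimage_def)
  moreover have "Measurable.pred borel (\<lambda>z. ennreal (2 * \<bar>fst z\<bar>) \<le> h (snd z))"
    by measurable
  ultimately show ?thesis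
    by (simp add: pred_def)
qed

lemma steiner_e2_borel:
  assumes "S \<in> sets borel"
  shows "steiner S (0, 1) \<in> sets borel"
proof -
  define h where "h x = emeasure lborel (Pair x -` S)" for x
  have [measurable]: "h \<in> borel_measurable borel"
    using lborel_pair.measurable_emeasure_Pair1[OF assms[folded sets_lborel_pair_iff]]
    by (simp add: h_def[abs_def])
  have "Pair x -` S \<in> sets borel" for x
    using sets_Pair1[OF assms[folded sets_lborel_pair_iff]] by simp
  then have "steiner S (0, 1) = {z. ennreal (2 * \<bar>snd z\<bar>) \<le> h (fst z)}"
    by (simp add: steiner_e2 h_def vimage_def)
  moreover have "Measurable.pred borel (\<lambda>z. ennreal (2 * \<bar>snd z\<bar>) \<le> h (fst z))"
    by measurable
  ultimately show ?thesis
    by (simp add: pred_def)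
qed

lemma steiner_e1_cong_AE:
  assumes "AE y in lborel. emeasure lebesgue {t. (t, y) \<in> E} = emeasure lebesgue {t. (t, y) \<in> S}"
  shows "AE z in lborel. z \<in> steiner E (1, 0) \<longleftrightarrow> z \<in> steiner S (1, 0)"
  using AE_lborel_pair_snd[OF assms] by eventually_elim (simp add: steiner_e1)

lemma steiner_e2_cong_AE:
  assumes "AE x in lborel. emeasure lebesgue {t. (x, t) \<in> E} = emeasure lebesgue {t. (x, t) \<in> S}"
  shows "AE z in lborel. z \<in> steiner E (0, 1) \<longleftrightarrow> z \<in> steiner S (0, 1)"
  using AE_lborel_pair_fst[OF assms] by eventually_elim (simp add: steiner_e2)

lemma nn_integral_steiner_e1_le:
  fixes S :: "(real \<times> real) set" and \<phi> :: "real \<times> real \<Rightarrow> real"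
  assumes S [measurable]: "S \<in> sets borel" and [measurable]: "\<phi> \<in> borel_measurable borel"
    and \<phi>_mono: "\<And>y s t. \<bar>s\<bar> \<le> \<bar>t\<bar> \<Longrightarrow> \<phi> (s, y) \<le> \<phi> (t, y)"
  shows "(\<integral>\<^sup>+z. ennreal \<bar>\<phi> z\<bar> * indicator (sym_diff (steiner S (1, 0)) {z. \<phi> z \<le> 0}) z \<partial>lborel)
       \<le> (\<integral>\<^sup>+z. ennreal \<bar>\<phi> z\<bar> * indicator (sym_diff S {z. \<phi> z \<le> 0}) z \<partial>lborel)"
proof -
  have [measurable]: "steiner S (1, 0) \<in> sets borel"
    using steiner_e1_borel[OF S] .
  have indicator_section: "indicator (sym_diff X Y) (x, y) = (indicator (sym_diff {t. (t, y) \<in> X} {t. (t, y) \<in> Y}) x :: ennreal)"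
    for X Y :: "(real \<times> real) set" and x y
    by (simp add: indicator_def)
  have inner: "(\<integral>\<^sup>+x. ennreal \<bar>\<phi> (x, y)\<bar> * indicator (sym_diff (steiner S (1, 0)) {z. \<phi> z \<le> 0}) (x, y) \<partial>lborel)
      \<le> (\<integral>\<^sup>+x. ennreal \<bar>\<phi> (x, y)\<bar> * indicator (sym_diff S {z. \<phi> z \<le> 0}) (x, y) \<partial>lborel)" for y
  proof -
    have A: "{t. (t, y) \<in> S} \<in> sets borel"
      using sets_Pair2[OF S[folded sets_lborel_pair_iff]] by (simp add: vimage_def)
    then have "{t. (t, y) \<in> steiner S (1, 0)} = {t. ennreal (2 * \<bar>t\<bar>) \<le> emeasure lborel {t. (t, y) \<in> S}}"
      by (simp add: steiner_e1)
    with nn_integral_symmetric_rearrangement_le[OF A, of "\<lambda>t. \<phi> (t, y)"] \<phi>_mono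
    show ?thesis
      unfolding indicator_section by simp
  qed
  show ?thesis
    by (subst (1 2) nn_integral_lborel_pair_snd) (measurable, intro nn_integral_mono inner)
qed

lemma nn_integral_steiner_e2_le:
  fixes S :: "(real \<times> real) set" and \<phi> :: "real \<times> real \<Rightarrow> real"
  assumes S [measurable]: "S \<in> sets borel" and [measurable]: "\<phi> \<in> borel_measurable borel"
    and \<phi>_mono: "\<And>x s t. \<bar>s\<bar> \<le> \<bar>t\<bar> \<Longrightarrow> \<phi> (x, s) \<le> \<phi> (x, t)"
  shows "(\<integral>\<^sup>+z. ennreal \<bar>\<phi> z\<bar> * indicator (sym_diff (steiner S (0, 1)) {z. \<phi> z \<le> 0}) z \<partial>lborel)
       \<le> (\<integral>\<^sup>+z. ennreal \<bar>\<phi> z\<bar> * indicator (sym_diff S {z. \<phi> z \<le> 0}) z \<partial>lborel)"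
proof -
  have [measurable]: "steiner S (0, 1) \<in> sets borel"
    using steiner_e2_borel[OF S] .
  have indicator_section: "indicator (sym_diff X Y) (x, y) = (indicator (sym_diff {t. (x, t) \<in> X} {t. (x, t) \<in> Y}) y :: ennreal)"
    for X Y :: "(real \<times> real) set" and x y
    by (simp add: indicator_def)
  have inner: "(\<integral>\<^sup>+y. ennreal \<bar>\<phi> (x, y)\<bar> * indicator (sym_diff (steiner S (0, 1)) {z. \<phi> z \<le> 0}) (x, y) \<partial>lborel)
      \<le> (\<integral>\<^sup>+y. ennreal \<bar>\<phi> (x, y)\<bar> * indicator (sym_diff S {z. \<phi> z \<le> 0}) (x, y) \<partial>lborel)" for x
  proof -
    have A: "{t. (x, t) \<in> S} \<in> sets borel"
      using sets_Pair1[OF S[folded sets_lborel_pair_iff]] by (simp add: vimage_def)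
    then have "{t. (x, t) \<in> steiner S (0, 1)} = {t. ennreal (2 * \<bar>t\<bar>) \<le> emeasure lborel {t. (x, t) \<in> S}}"
      by (simp add: steiner_e2)
    with nn_integral_symmetric_rearrangement_le[OF A, of "\<lambda>t. \<phi> (x, t)"] \<phi>_mono
    show ?thesis
      unfolding indicator_section by simp
  qed
  show ?thesis
    by (subst (1 2) nn_integral_lborel_pair_fst) (measurable, intro nn_integral_mono inner)
qed

lemma dissipation_box_steiner_e1_le:
  fixes E :: "(real \<times> real) set" and \<alpha> \<beta> :: real
  assumes "E \<in> sets lebesgue" and "\<alpha> > 0" "\<beta> > 0"
  shows "dissipation (steiner E (1, 0)) ({-\<alpha>..\<alpha>} \<times> {-\<beta>..\<beta>}) \<le> dissipation E ({-\<alpha>..\<alpha>} \<times> {-\<beta>..\<beta>})"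
proof -
  obtain S where S: "S \<in> sets borel" "AE z in lborel. z \<in> E \<longleftrightarrow> z \<in> S"
    "AE y in lborel. emeasure lebesgue {t. (t, y) \<in> E} = emeasure lebesgue {t. (t, y) \<in> S}"
    using lebesgue_set_borel_representative[OF assms(1)] by blast
  have "dissipation (steiner E (1, 0)) ({-\<alpha>..\<alpha>} \<times> {-\<beta>..\<beta>})
      = dissipation (steiner S (1, 0)) ({-\<alpha>..\<alpha>} \<times> {-\<beta>..\<beta>})"
    by (rule dissipation_cong_AE[OF steiner_e1_cong_AE[OF S(3)]])
  also have "\<dots> \<le> dissipation S ({-\<alpha>..\<alpha>} \<times> {-\<beta>..\<beta>})"
    unfolding dissipation_box[OF assms(2,3)]
    by (rule nn_integral_steiner_e1_le[OF S(1) borel_measurable_signed_dist_box])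
      (auto simp: signed_dist_box_def max_def)
  also have "\<dots> = dissipation E ({-\<alpha>..\<alpha>} \<times> {-\<beta>..\<beta>})"
    by (rule dissipation_cong_AE[OF S(2), symmetric])
  finally show ?thesis .
qed

lemma dissipation_box_steiner_e2_le:
  fixes E :: "(real \<times> real) set" and \<alpha> \<beta> :: real
  assumes "E \<in> sets lebesgue" and "\<alpha> > 0" "\<beta> > 0"
  shows "dissipation (steiner E (0, 1)) ({-\<alpha>..\<alpha>} \<times> {-\<beta>..\<beta>}) \<le> dissipation E ({-\<alpha>..\<alpha>} \<times> {-\<beta>..\<beta>})"
proof -
  obtain S where S: "S \<in> sets borel" "AE z in lborel. z \<in> E \<longleftrightarrow> z \<in> S"
    "AE x in lborel. emeasure lebesgue {t. (x, t) \<in> E} = emeasure lebesgue {t. (x, t) \<in> S}"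
    using lebesgue_set_borel_representative[OF assms(1)] by blast
  have "dissipation (steiner E (0, 1)) ({-\<alpha>..\<alpha>} \<times> {-\<beta>..\<beta>})
      = dissipation (steiner S (0, 1)) ({-\<alpha>..\<alpha>} \<times> {-\<beta>..\<beta>})"
    by (rule dissipation_cong_AE[OF steiner_e2_cong_AE[OF S(3)]])
  also have "\<dots> \<le> dissipation S ({-\<alpha>..\<alpha>} \<times> {-\<beta>..\<beta>})"
    unfolding dissipation_box[OF assms(2,3)]
    by (rule nn_integral_steiner_e2_le[OF S(1) borel_measurable_signed_dist_box])
      (auto simp: signed_dist_box_def max_def)
  also have "\<dots> = dissipation E ({-\<alpha>..\<alpha>} \<times> {-\<beta>..\<beta>})"
    by (rule dissipation_cong_AE[OF S(2), symmetric])
  finally show ?thesis .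
qed

theorem proposition2p5:
  fixes E :: "(real \<times> real) set" and a b :: real and eta :: "real \<times> real"
  assumes "finite_perimeter E"
    and "emeasure lebesgue E = 1"
    and "a > 0" and "b > 0" and "a * b = 1"
    and "eta \<in> {(1, 0), (-1, 0), (0, 1), (0, -1)}"
  shows "dissipation E ({-a/2..a/2} \<times> {-b/2..b/2})
           \<ge> dissipation (steiner E eta) ({-a/2..a/2} \<times> {-b/2..b/2})"
proof -
  have E: "E \<in> sets lebesgue"
    using assms(1) by (simp add: finite_perimeter_def)
  have R: "{-a/2..a/2} \<times> {-b/2..b/2} = {-(a/2)..a/2} \<times> {-(b/2)..b/2}"
    by simp
  have "steiner E eta \<in> {steiner E (1, 0), steiner E (0, 1)}"
    using assms(6) steiner_uminus[of E "(1, 0)"] steiner_uminus[of E "(0, 1)"] by auto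
  then show ?thesis
    unfolding R using assms(3,4)
      dissipation_box_steiner_e1_le[OF E, of "a/2" "b/2"] dissipation_box_steiner_e2_le[OF E, of "a/2" "b/2"]
    by auto
qed

end
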